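(* Let $B$ be a Boolean algebra that is not complete. Then there exist a CFG-space $X$ over $B$ (one may take $X=\{(x,y)\in B^2: x\wedge y=0\}$ with $d((x,y),(x',y'))=(x\triangle x')\vee(y\triangle y')$), subsets $U,V\subset X$, and an isometry $f:U\to V$ such that there is no contractive map $F:X\to X$ whose restriction to $U$ is $f$.
   Context: A Boolean metric space over $B$ is a set with symmetric $d$ into $B$, $d(x,y)=0$ iff $x=y$, $d(x,z)\le d(x,y)\vee d(y,z)$. Contractive: $d(f(x),f(y))\le d(x,y)$; isometry: bijection preserving $d$. A partition of $B$ is a finite family of pairwise disjoint elements with supremum $1$; $x$ is a convex combination of $x_0,\dots,x_n$ with coefficients a partition $a_0,\dots,a_n$ if $a_i\wedge d(x,x_i)=0$ for all $i$. A CFG-space is a Boolean metric space that is convex (every such convex combination of its points exists in it) and finitely generated (some finite subset $S$ has every point as a convex combination of points of $S$). $B$ is complete if every subset has a supremum; $\triangle$ is symmetric difference. *)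

theory Defs
  imports Main
begin

definition bool_metric_space :: "'x set \<Rightarrow> ('x \<Rightarrow> 'x \<Rightarrow> 'b::boolean_algebra) \<Rightarrow> bool" where
  "bool_metric_space X d \<longleftrightarrow>
     (\<forall>x\<in>X. \<forall>y\<in>X. d x y = d y x) \<and>
     (\<forall>x\<in>X. \<forall>y\<in>X. d x y = bot \<longleftrightarrow> x = y) \<and>
     (\<forall>x\<in>X. \<forall>y\<in>X. \<forall>z\<in>X. d x z \<le> sup (d x y) (d y z))"

definition is_partition :: "nat \<Rightarrow> (nat \<Rightarrow> 'b::boolean_algebra) \<Rightarrow> bool" where
  "is_partition n a \<longleftrightarrow>
     (\<forall>i\<le>n. \<forall>j\<le>n. i \<noteq> j \<longrightarrow> inf (a i) (a j) = bot) \<and>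
     Sup_fin (a ` {..n}) = top"

definition convex_comb :: "('x \<Rightarrow> 'x \<Rightarrow> 'b::boolean_algebra) \<Rightarrow> 'x \<Rightarrow> nat \<Rightarrow> (nat \<Rightarrow> 'x) \<Rightarrow> (nat \<Rightarrow> 'b) \<Rightarrow> bool" where
  "convex_comb d x n xs a \<longleftrightarrow> is_partition n a \<and> (\<forall>i\<le>n. inf (a i) (d x (xs i)) = bot)"

definition bms_convex :: "'x set \<Rightarrow> ('x \<Rightarrow> 'x \<Rightarrow> 'b::boolean_algebra) \<Rightarrow> bool" where
  "bms_convex X d \<longleftrightarrow>
     (\<forall>n xs a. (\<forall>i\<le>n. xs i \<in> X) \<and> is_partition n a \<longrightarrow> (\<exists>x\<in>X. convex_comb d x n xs a))"

definition bms_fin_gen :: "'x set \<Rightarrow> ('x \<Rightarrow> 'x \<Rightarrow> 'b::boolean_algebra) \<Rightarrow> bool" where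
  "bms_fin_gen X d \<longleftrightarrow>
     (\<exists>S. finite S \<and> S \<subseteq> X \<and>
        (\<forall>x\<in>X. \<exists>n xs a. (\<forall>i\<le>n. xs i \<in> S) \<and> convex_comb d x n xs a))"

definition CFG_space :: "'x set \<Rightarrow> ('x \<Rightarrow> 'x \<Rightarrow> 'b::boolean_algebra) \<Rightarrow> bool" where
  "CFG_space X d \<longleftrightarrow> bool_metric_space X d \<and> bms_convex X d \<and> bms_fin_gen X d"

definition contractive_on :: "'x set \<Rightarrow> ('x \<Rightarrow> 'x \<Rightarrow> 'b::boolean_algebra) \<Rightarrow> ('x \<Rightarrow> 'x) \<Rightarrow> bool" where
  "contractive_on X d F \<longleftrightarrow> F ` X \<subseteq> X \<and> (\<forall>x\<in>X. \<forall>y\<in>X. d (F x) (F y) \<le> d x y)"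

definition isometry_betw :: "('x \<Rightarrow> 'x \<Rightarrow> 'b::boolean_algebra) \<Rightarrow> ('x \<Rightarrow> 'x) \<Rightarrow> 'x set \<Rightarrow> 'x set \<Rightarrow> bool" where
  "isometry_betw d f U V \<longleftrightarrow> bij_betw f U V \<and> (\<forall>x\<in>U. \<forall>y\<in>U. d (f x) (f y) = d x y)"

definition complete_BA :: "'b::boolean_algebra itself \<Rightarrow> bool" where
  "complete_BA _ \<longleftrightarrow> (\<forall>A::'b set. \<exists>s. (\<forall>a\<in>A. a \<le> s) \<and> (\<forall>u. (\<forall>a\<in>A. a \<le> u) \<longrightarrow> s \<le> u))"

end

theory Submission
  imports Defs
begin

(* Over a Boolean algebra B, the set X of disjoint pairs (x,y), with distance
   d((x,y),(x',y')) = (x \<triangle> x') \<squnion> (y \<triangle> y'), is a CFG-space: the triangle law comes from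
   x \<triangle> z = (x \<triangle> y) \<triangle> (y \<triangle> z), convex combinations are glued together componentwise
   along the partition, and the three points (1,0), (0,1), (0,0) generate X.

   If B is not complete, pick A \<subseteq> B without a supremum.  Let U consist of the
   points (a,0) with a \<in> A and (-u,0) with u an upper bound of A, and let f swap
   (a,0) to (0,a) for a \<in> A and fix the other points of U; f is an isometry.  For
   any contractive extension F, the second component t of F(1,0) satisfies
   a \<le> t for a \<in> A (compare with (a,0)) and t \<le> u for every upper bound u
   (compare with (-u,0)), so t would be the supremum of A. *)

definition sym_diff :: "'a::boolean_algebra \<Rightarrow> 'a \<Rightarrow> 'a"  (infixr \<open>\<triangle>\<close> 65) where
  "x \<triangle> y = sup (inf x (- y)) (inf (- x) y)"

interpretation sym_diff:
  abstract_boolean_algebra_sym_diff inf sup uminus bot top "sym_diff :: 'a::boolean_algebra \<Rightarrow> _"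
  by (intro abstract_boolean_algebra_sym_diff.intro abstract_boolean_algebra_sym_diff_axioms.intro
      boolean_algebra.abstract_boolean_algebra_axioms) (fact sym_diff_def)

lemma sym_diff_eq_bot_iff: "(x::'a::boolean_algebra) \<triangle> y = bot \<longleftrightarrow> x = y"
  by (metis sym_diff.xor_left_self sym_diff.xor_self sym_diff.xor.right_neutral)

lemma sym_diff_le_sup: "(x::'a::boolean_algebra) \<triangle> y \<le> sup x y"
  unfolding sym_diff_def by (simp add: le_supI1 le_supI2)

lemma sym_diff_triangle: "(x::'a::boolean_algebra) \<triangle> z \<le> sup (x \<triangle> y) (y \<triangle> z)"
proof -
  have "x \<triangle> z = (x \<triangle> y) \<triangle> (y \<triangle> z)"
    by (simp add: sym_diff.xor.assoc)
  then show ?thesis by (simp add: sym_diff_le_sup)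
qed

lemma sym_diff_disjoint: "inf x y = bot \<Longrightarrow> (x::'a::boolean_algebra) \<triangle> y = sup x y"
  unfolding sym_diff_def
  by (metis inf_absorb1 inf_absorb2 inf_commute inf_shunt)

lemma inf_sym_diff_eq_bot: "inf a x = inf a y \<Longrightarrow> inf a ((x::'a::boolean_algebra) \<triangle> y) = bot"
  by (simp add: sym_diff.conj_xor_distrib)

lemma inf_compl_eq_bot_iff: "inf x (- y) = bot \<longleftrightarrow> (x::'a::boolean_algebra) \<le> y"
  by (simp add: inf_shunt)

lemma partition_local_bot:
  fixes a :: "nat \<Rightarrow> 'a::boolean_algebra"
  assumes "is_partition n a" and "\<And>j. j \<le> n \<Longrightarrow> inf (a j) z = bot"
  shows "z = bot"
proof -
  have "Sup_fin (a ` {..n}) \<le> - z"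
    using assms(2) by (intro Sup_fin.boundedI) (auto simp: inf_shunt)
  then have "top \<le> - z" using assms(1) unfolding is_partition_def by simp
  then have "z \<le> bot" using compl_mono[of top "- z"] by simp
  then show ?thesis by (rule bot_unique[THEN iffD1])
qed

definition partition_glue :: "nat \<Rightarrow> (nat \<Rightarrow> 'a::boolean_algebra) \<Rightarrow> (nat \<Rightarrow> 'a) \<Rightarrow> 'a" where
  "partition_glue n a g = Sup_fin ((\<lambda>i. inf (a i) (g i)) ` {..n})"

lemma partition_glue_block:
  fixes a g :: "nat \<Rightarrow> 'a::boolean_algebra"
  assumes "is_partition n a" and "j \<le> n"
  shows "inf (a j) (partition_glue n a g) = inf (a j) (g j)"
proof (rule antisym)
  have fin: "finite ((\<lambda>i. inf (a i) (g i)) ` {..n})" by simp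
  have "partition_glue n a g \<le> sup (- a j) (g j)"
    unfolding partition_glue_def
  proof (rule Sup_fin.boundedI[OF fin])
    show "(\<lambda>i. inf (a i) (g i)) ` {..n} \<noteq> {}" by auto
    fix b assume "b \<in> (\<lambda>i. inf (a i) (g i)) ` {..n}"
    then obtain i where i: "i \<le> n" and b: "b = inf (a i) (g i)" by auto
    show "b \<le> sup (- a j) (g j)"
    proof (cases "i = j")
      case True
      then show ?thesis by (simp add: b le_supI2)
    next
      case False
      then have "a i \<le> - a j"
        using assms i unfolding is_partition_def by (simp add: inf_shunt)
      then show ?thesis by (simp add: b le_infI1 le_supI1)
    qed
  qed
  then have "inf (a j) (partition_glue n a g) \<le> inf (a j) (sup (- a j) (g j))"
    by (rule inf_mono[OF order_refl])
  then show "inf (a j) (partition_glue n a g) \<le> inf (a j) (g j)"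
    by (simp add: inf_sup_distrib1)
  have "inf (a j) (g j) \<le> partition_glue n a g"
    unfolding partition_glue_def by (rule Sup_fin.coboundedI[OF fin]) (use assms(2) in auto)
  then show "inf (a j) (g j) \<le> inf (a j) (partition_glue n a g)" by simp
qed

definition disjoint_pairs :: "('a::boolean_algebra \<times> 'a) set" where
  "disjoint_pairs = {p. inf (fst p) (snd p) = bot}"

definition pair_dist :: "'a::boolean_algebra \<times> 'a \<Rightarrow> 'a \<times> 'a \<Rightarrow> 'a" where
  "pair_dist p q = sup (fst p \<triangle> fst q) (snd p \<triangle> snd q)"

lemma pair_dist_metric: "bool_metric_space (X :: ('a::boolean_algebra \<times> 'a) set) pair_dist"
  unfolding bool_metric_space_def pair_dist_def
proof (intro conjI ballI)
  fix p q r :: "'a \<times> 'a"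
  show "sup (fst p \<triangle> fst q) (snd p \<triangle> snd q) = sup (fst q \<triangle> fst p) (snd q \<triangle> snd p)"
    by (simp add: sym_diff.xor.commute)
  show "sup (fst p \<triangle> fst q) (snd p \<triangle> snd q) = bot \<longleftrightarrow> p = q"
    by (simp add: sym_diff_eq_bot_iff prod_eq_iff)
  have "sup (fst p \<triangle> fst r) (snd p \<triangle> snd r)
        \<le> sup (sup (fst p \<triangle> fst q) (fst q \<triangle> fst r)) (sup (snd p \<triangle> snd q) (snd q \<triangle> snd r))"
    by (intro sup_mono sym_diff_triangle)
  then show "sup (fst p \<triangle> fst r) (snd p \<triangle> snd r)
        \<le> sup (sup (fst p \<triangle> fst q) (snd p \<triangle> snd q)) (sup (fst q \<triangle> fst r) (snd q \<triangle> snd r))"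
    by (simp add: ac_simps)
qed

(* Convex combinations are obtained by gluing each component along the partition. *)
lemma disjoint_pairs_convex: "bms_convex (disjoint_pairs :: ('a::boolean_algebra \<times> 'a) set) pair_dist"
  unfolding bms_convex_def
proof (intro allI impI)
  fix n and xs :: "nat \<Rightarrow> 'a \<times> 'a" and a :: "nat \<Rightarrow> 'a"
  assume "(\<forall>i\<le>n. xs i \<in> disjoint_pairs) \<and> is_partition n a"
  then have xs: "\<And>i. i \<le> n \<Longrightarrow> inf (fst (xs i)) (snd (xs i)) = bot" and a: "is_partition n a"
    unfolding disjoint_pairs_def by auto
  define s where "s = partition_glue n a (fst \<circ> xs)"
  define t where "t = partition_glue n a (snd \<circ> xs)"
  have s: "inf (a j) s = inf (a j) (fst (xs j))" and t: "inf (a j) t = inf (a j) (snd (xs j))"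
    if "j \<le> n" for j
    using partition_glue_block[OF a that] by (simp_all add: s_def t_def)
  have "inf (a j) (inf s t) = bot" if "j \<le> n" for j
  proof -
    have "inf (a j) (inf s t) = inf (inf (a j) s) (inf (a j) t)" by (simp add: ac_simps)
    also have "\<dots> = inf (a j) (inf (fst (xs j)) (snd (xs j)))"
      using s[OF that] t[OF that] by (simp add: ac_simps)
    finally show ?thesis using xs[OF that] by simp
  qed
  then have "inf s t = bot" by (rule partition_local_bot[OF a])
  moreover have "convex_comb pair_dist (s, t) n xs a"
    unfolding convex_comb_def pair_dist_def
    using a s t by (simp add: inf_sup_distrib1 inf_sym_diff_eq_bot)
  ultimately show "\<exists>x\<in>disjoint_pairs. convex_comb pair_dist x n xs a"
    unfolding disjoint_pairs_def by auto
qed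

lemma disjoint_pair_convex_comb:
  fixes x y :: "'a::boolean_algebra"
  assumes xy: "inf x y = bot"
  shows "convex_comb pair_dist (x, y) 2 (nth [(top, bot), (bot, top), (bot, bot)]) (nth [x, y, - sup x y])"
  unfolding convex_comb_def is_partition_def
proof (intro conjI allI impI)
  fix i j :: nat assume "i \<le> 2" "j \<le> 2" "i \<noteq> j"
  then show "inf ([x, y, - sup x y] ! i) ([x, y, - sup x y] ! j) = bot"
    using xy by (auto simp: le_Suc_eq numeral_2_eq_2 inf_commute)
next
  have at2: "{..2::nat} = {0, 1, 2}" by auto
  show "Sup_fin (nth [x, y, - sup x y] ` {..2}) = top"
    by (simp add: at2 sup_assoc[symmetric] del: compl_sup)
next
  fix i :: nat assume "i \<le> 2"
  then show "inf ([x, y, - sup x y] ! i) (pair_dist (x, y) ([(top, bot), (bot, top), (bot, bot)] ! i)) = bot"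
    using xy by (auto simp: le_Suc_eq numeral_2_eq_2 pair_dist_def inf_sup_distrib1 inf_commute)
qed

lemma disjoint_pairs_fin_gen: "bms_fin_gen (disjoint_pairs :: ('a::boolean_algebra \<times> 'a) set) pair_dist"
  unfolding bms_fin_gen_def
proof (rule exI[where x = "{(top, bot), (bot, top), (bot, bot)}"], intro conjI ballI)
  let ?S = "{(top, bot), (bot, top), (bot, bot)} :: ('a \<times> 'a) set"
  show "finite ?S" by simp
  show "?S \<subseteq> disjoint_pairs" by (simp add: disjoint_pairs_def)
  fix p :: "'a \<times> 'a" assume "p \<in> disjoint_pairs"
  then obtain x y where p: "p = (x, y)" and xy: "inf x y = bot"
    unfolding disjoint_pairs_def by (cases p) auto
  have "\<forall>i\<le>2. [(top, bot), (bot, top), (bot, bot)] ! i \<in> ?S"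
    by (auto simp: le_Suc_eq numeral_2_eq_2)
  then show "\<exists>n xs a. (\<forall>i\<le>n. xs i \<in> ?S) \<and> convex_comb pair_dist p n xs a"
    using disjoint_pair_convex_comb[OF xy] unfolding p by blast
qed

theorem disjoint_pairs_CFG: "CFG_space (disjoint_pairs :: ('a::boolean_algebra \<times> 'a) set) pair_dist"
  unfolding CFG_space_def
  using pair_dist_metric disjoint_pairs_convex disjoint_pairs_fin_gen by blast

(* A map preserving a Boolean metric is injective, hence an isometry onto its image. *)
lemma distance_preserving_isometry:
  assumes "bool_metric_space X d" and "U \<subseteq> X" and "f ` U \<subseteq> X"
    and preserve: "\<And>x y. x \<in> U \<Longrightarrow> y \<in> U \<Longrightarrow> d (f x) (f y) = d x y"
  shows "isometry_betw d f U (f ` U)"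
proof -
  have "inj_on f U"
  proof (rule inj_onI)
    fix x y assume x: "x \<in> U" and y: "y \<in> U" and eq: "f x = f y"
    have "f y \<in> X" using y assms(3) by blast
    then have "d (f x) (f y) = bot" using eq assms(1) unfolding bool_metric_space_def by simp
    then have "d x y = bot" using preserve[OF x y] by simp
    then show "x = y" using x y assms(1,2) unfolding bool_metric_space_def by blast
  qed
  then show ?thesis unfolding isometry_betw_def by (simp add: inj_on_imp_bij_betw preserve)
qed

definition swap_domain :: "'a::boolean_algebra set \<Rightarrow> ('a \<times> 'a) set" where
  "swap_domain A = (\<lambda>x. (x, bot)) ` (A \<union> {- u | u. \<forall>a\<in>A. a \<le> u})"

definition swap_on :: "'a::boolean_algebra set \<Rightarrow> 'a \<times> 'a \<Rightarrow> 'a \<times> 'a" where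
  "swap_on A p = (if fst p \<in> A then (bot, fst p) else p)"

lemma swap_domain_cases:
  assumes "p \<in> swap_domain A"
  obtains x where "p = (x, bot)" and "x \<in> A \<or> (\<forall>a\<in>A. inf a x = bot)"
  using assms unfolding swap_domain_def by (auto simp: inf_compl_eq_bot_iff)

(* Distances between points (x,0), (y,0) of the domain are x \<triangle> y; after swapping
   one of them they become x \<squnion> y, which agrees because such x, y are disjoint. *)
lemma swap_on_preserves_dist:
  assumes "p \<in> swap_domain A" and "q \<in> swap_domain A"
  shows "pair_dist (swap_on A p) (swap_on A q) = pair_dist p q"
proof -
  obtain x where p: "p = (x, bot)" and x: "x \<in> A \<or> (\<forall>a\<in>A. inf a x = bot)"
    using assms(1) by (rule swap_domain_cases)
  obtain y where q: "q = (y, bot)" and y: "y \<in> A \<or> (\<forall>a\<in>A. inf a y = bot)"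
    using assms(2) by (rule swap_domain_cases)
  have "inf x y = bot" if "(x \<in> A) \<noteq> (y \<in> A)"
    using that x y by (auto simp: inf_commute)
  then show ?thesis
    by (cases "x \<in> A"; cases "y \<in> A")
       (simp_all add: p q swap_on_def pair_dist_def sym_diff_disjoint sup_commute)
qed

lemma swap_on_isometry:
  "isometry_betw pair_dist (swap_on A) (swap_domain A) (swap_on A ` swap_domain A)"
  and swap_domain_subset: "swap_domain A \<subseteq> disjoint_pairs"
  and swap_image_subset: "swap_on A ` swap_domain A \<subseteq> disjoint_pairs"
proof -
  show dom: "swap_domain A \<subseteq> disjoint_pairs"
    by (auto simp: swap_domain_def disjoint_pairs_def)
  show img: "swap_on A ` swap_domain A \<subseteq> disjoint_pairs"
    by (auto simp: swap_domain_def disjoint_pairs_def swap_on_def)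
  show "isometry_betw pair_dist (swap_on A) (swap_domain A) (swap_on A ` swap_domain A)"
    using pair_dist_metric dom img swap_on_preserves_dist by (rule distance_preserving_isometry)
qed

lemma contractive_extension_gives_sup:
  fixes A :: "'a::boolean_algebra set"
  assumes "contractive_on disjoint_pairs pair_dist F"
    and ext: "\<forall>p\<in>swap_domain A. F p = swap_on A p"
  defines "t \<equiv> snd (F (top, bot))"
  shows "\<forall>a\<in>A. a \<le> t" and "\<forall>u. (\<forall>a\<in>A. a \<le> u) \<longrightarrow> t \<le> u"
proof -
  have "(top, bot) \<in> (disjoint_pairs :: ('a \<times> 'a) set)" by (simp add: disjoint_pairs_def)
  then have contr: "pair_dist (F (top, bot)) (F p) \<le> pair_dist (top, bot) p"
    if "p \<in> swap_domain A" for p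
    using assms(1) swap_domain_subset that unfolding contractive_on_def by blast
  show "\<forall>a\<in>A. a \<le> t"
  proof
    fix a assume a: "a \<in> A"
    have "(a, bot) \<in> swap_domain A" using a by (simp add: swap_domain_def)
    with contr ext a have "t \<triangle> a \<le> - a"
      by (fastforce simp: t_def pair_dist_def swap_on_def)
    then have "inf (- t) a \<le> - a" unfolding sym_diff_def by simp
    then have "inf a (- t) \<le> inf a (- a)" by (metis inf_commute inf_le1 le_infI)
    then have "inf a (- t) = bot" by (simp add: bot_unique)
    then show "a \<le> t" by (simp add: inf_compl_eq_bot_iff)
  qed
  show "\<forall>u. (\<forall>a\<in>A. a \<le> u) \<longrightarrow> t \<le> u"
  proof (intro allI impI)
    fix u assume ub: "\<forall>a\<in>A. a \<le> u"
    then have dom: "(- u, bot) \<in> swap_domain A" by (auto simp: swap_domain_def)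
    (* if -u \<in> A then -u \<le> u forces -u = bot, so the swap fixes (-u,0) in any case *)
    have "- u \<in> A \<Longrightarrow> - u = bot"
      using ub by (metis inf_compl_eq_bot_iff inf_idem)
    then have "F (- u, bot) = (- u, bot)"
      using ext dom by (auto simp: swap_on_def)
    with contr[OF dom] show "t \<le> u"
      by (simp add: t_def pair_dist_def)
  qed
qed

theorem mainTheorem13:
  assumes "\<not> complete_BA TYPE('b::boolean_algebra)"
  shows "\<exists>(X :: ('b \<times> 'b) set) (d :: 'b \<times> 'b \<Rightarrow> 'b \<times> 'b \<Rightarrow> 'b) U V f.
           CFG_space X d \<and> U \<subseteq> X \<and> V \<subseteq> X \<and> isometry_betw d f U V \<and>
           \<not> (\<exists>F. contractive_on X d F \<and> (\<forall>x\<in>U. F x = f x))"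
proof -
  obtain A :: "'b set" where no_sup: "\<not> (\<exists>s. (\<forall>a\<in>A. a \<le> s) \<and> (\<forall>u. (\<forall>a\<in>A. a \<le> u) \<longrightarrow> s \<le> u))"
    using assms unfolding complete_BA_def by blast
  have no_extension:
    "\<not> (\<exists>F. contractive_on disjoint_pairs pair_dist F \<and> (\<forall>p\<in>swap_domain A. F p = swap_on A p))"
  proof
    assume "\<exists>F. contractive_on disjoint_pairs pair_dist F \<and> (\<forall>p\<in>swap_domain A. F p = swap_on A p)"
    then obtain F where "contractive_on disjoint_pairs pair_dist F" "\<forall>p\<in>swap_domain A. F p = swap_on A p"
      by blast
    from contractive_extension_gives_sup[OF this] show False
      using no_sup by blast
  qed
  show ?thesis
    by (intro exI conjI, fact disjoint_pairs_CFG, fact swap_domain_subset, fact swap_image_subset,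
        fact swap_on_isometry, fact no_extension)
qed

end
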